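(* With the notation of the context, let $\beta^*=\inf_{x\in\Delta}F(x)$. If $r$ is a relation of type 4b, then $x^*\in C_r=\{x\in\Delta: x_r+X_r-x_rX_r<3/4\}$ for every $x^*\in\Delta$ with $F(x^* )=\beta^*$.
   Context: Fix an integer $n\ge2$ and free generators $\xi_1,\dots,\xi_n$ of a free group; throughout $i,j,k\in\{1,\dots,n\}$ and $t,s,p\in\{-1,+1\}$. Let $\Psi$ be the set of reduced words $\xi_i^{2t}$; $\xi_i^t\xi_j^{2s}$ ($i\ne j$); $\xi_i^t\xi_j^s\xi_k^p$ ($i\ne j$, $j\ne k$). For a letter $\xi_a^x$ let $S(\xi_a^x)\subset\Psi$ be the set of words in $\Psi$ beginning with $\xi_a^x$, namely $\{\xi_a^{2x}\}\cup\{\xi_a^x\xi_j^{2s}\}\cup\{\xi_a^x\xi_j^s\xi_k^p\}$; for $a\ne b$ let $S(\xi_a^x\xi_b^y)=\{\xi_a^x\xi_b^{2y}\}\cup\{\xi_a^x\xi_b^y\xi_k^p: k\ne b\}$. A relation $r$ is a pair $(\psi_r,\Psi_r)$ with $\psi_r\in\Psi$, $\Psi_r\subseteq\Psi$. Let $\mathcal{F}$ be the collection of the following relations (indices $i_0\ne j_0$, in type 5a $i_0,j_0,k_0$ pairwise distinct, all signs arbitrary): 1a: $\psi_r=\xi_{i_0}^{2t_0}$, $\Psi_r=\Psi\setminus S(\xi_{i_0}^{t_0})$; 2b: $\psi_r=\xi_{i_0}^{t_0}\xi_{j_0}^{2s_0}$, $\Psi_r=\Psi\setminus S(\xi_{i_0}^{t_0}\xi_{j_0}^{s_0})$;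 3a: $\psi_r=\xi_{i_0}^{t_0}\xi_{j_0}^{s_0}\xi_{i_0}^{t_0}$, $\Psi_r=\Psi\setminus S(\xi_{j_0}^{s_0}\xi_{i_0}^{t_0})$; 4b: $\psi_r=\xi_{i_0}^{t_0}\xi_{j_0}^{s_0}\xi_{i_0}^{-t_0}$, $\Psi_r=S(\xi_{i_0}^{t_0})$; 5a: $\psi_r=\xi_{i_0}^{t_0}\xi_{j_0}^{s_0}\xi_{k_0}^{p_0}$, $\Psi_r=\Psi\setminus S(\xi_{j_0}^{s_0}\xi_{k_0}^{p_0})$. Let $\Delta=\{x\in\mathbb{R}^\Psi: x(\psi)>0\ \forall\psi,\ \sum_{\psi}x(\psi)=1\}$. For a relation $r$ and $x\in\Delta$ put $x_r=x(\psi_r)$, $X_r=\sum_{\psi\in\Psi_r}x(\psi)$, $f_r(x)=\frac{1-x_r}{x_r}\cdot\frac{1-X_r}{X_r}$, and $F(x)=\max_{r\in\mathcal{F}}f_r(x)$. *)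

theory Defs
  imports Complex_Main
begin

text \<open>A letter \<open>\<xi>_i^t\<close> is encoded as a pair (i, t) with i a generator index in {1..n}
  and t :: bool the sign (True = +1, False = -1).  A reduced word is the list of its
  letters, so \<open>\<xi>_i^{2t}\<close> is the list [(i,t),(i,t)].\<close>

type_synonym letter = "nat \<times> bool"
type_synonym word = "letter list"

definition Psi :: "nat \<Rightarrow> word set" where
  "Psi n =
     {[(i,t),(i,t)] | i t. i \<in> {1..n}}
   \<union> {[(i,t),(j,s),(j,s)] | i j t s. i \<in> {1..n} \<and> j \<in> {1..n} \<and> i \<noteq> j}
   \<union> {[(i,t),(j,s),(k,p)] | i j k t s p. i \<in> {1..n} \<and> j \<in> {1..n} \<and> k \<in> {1..n}
        \<and> i \<noteq> j \<and> j \<noteq> k}"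

definition S1 :: "nat \<Rightarrow> letter \<Rightarrow> word set" where
  "S1 n l = (case l of (a,x) \<Rightarrow>
      {[(a,x),(a,x)]}
    \<union> {[(a,x),(j,s),(j,s)] | j s. j \<in> {1..n} \<and> j \<noteq> a}
    \<union> {[(a,x),(j,s),(k,p)] | j k s p. j \<in> {1..n} \<and> k \<in> {1..n} \<and> j \<noteq> a \<and> j \<noteq> k})"

definition S2 :: "nat \<Rightarrow> letter \<Rightarrow> letter \<Rightarrow> word set" where
  "S2 n l1 l2 = (case (l1, l2) of ((a,x),(b,y)) \<Rightarrow>
      {[(a,x),(b,y),(b,y)]}
    \<union> {[(a,x),(b,y),(k,p)] | k p. k \<in> {1..n} \<and> k \<noteq> b})"

text \<open>A relation is a pair (\<psi>_r, \<Psi>_r).  The family \<F> of types 1a, 2b, 3a, 4b, 5a.\<close>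
type_synonym relation = "word \<times> word set"

definition rel_1a :: "nat \<Rightarrow> relation set" where
  "rel_1a n = {([(i,t),(i,t)], Psi n - S1 n (i,t)) | i t. i \<in> {1..n}}"

definition rel_2b :: "nat \<Rightarrow> relation set" where
  "rel_2b n = {([(i,t),(j,s),(j,s)], Psi n - S2 n (i,t) (j,s)) | i j t s.
      i \<in> {1..n} \<and> j \<in> {1..n} \<and> i \<noteq> j}"

definition rel_3a :: "nat \<Rightarrow> relation set" where
  "rel_3a n = {([(i,t),(j,s),(i,t)], Psi n - S2 n (j,s) (i,t)) | i j t s.
      i \<in> {1..n} \<and> j \<in> {1..n} \<and> i \<noteq> j}"

definition rel_4b :: "nat \<Rightarrow> relation set" where
  "rel_4b n = {([(i,t),(j,s),(i,\<not>t)], S1 n (i,t)) | i j t s.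
      i \<in> {1..n} \<and> j \<in> {1..n} \<and> i \<noteq> j}"

definition rel_5a :: "nat \<Rightarrow> relation set" where
  "rel_5a n = {([(i,t),(j,s),(k,p)], Psi n - S2 n (j,s) (k,p)) | i j k t s p.
      i \<in> {1..n} \<and> j \<in> {1..n} \<and> k \<in> {1..n} \<and> i \<noteq> j \<and> j \<noteq> k \<and> i \<noteq> k}"

definition Fam :: "nat \<Rightarrow> relation set" where
  "Fam n = rel_1a n \<union> rel_2b n \<union> rel_3a n \<union> rel_4b n \<union> rel_5a n"

definition Delta :: "nat \<Rightarrow> (word \<Rightarrow> real) set" where
  "Delta n = {x. (\<forall>\<psi>\<in>Psi n. x \<psi> > 0) \<and> (\<forall>\<psi>. \<psi> \<notin> Psi n \<longrightarrow> x \<psi> = 0)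
                 \<and> (\<Sum>\<psi>\<in>Psi n. x \<psi>) = 1}"

definition xr :: "relation \<Rightarrow> (word \<Rightarrow> real) \<Rightarrow> real" where
  "xr r x = x (fst r)"

definition Xr :: "relation \<Rightarrow> (word \<Rightarrow> real) \<Rightarrow> real" where
  "Xr r x = (\<Sum>\<psi>\<in>snd r. x \<psi>)"

definition frel :: "relation \<Rightarrow> (word \<Rightarrow> real) \<Rightarrow> real" where
  "frel r x = ((1 - xr r x) / xr r x) * ((1 - Xr r x) / Xr r x)"

definition Fmax :: "nat \<Rightarrow> (word \<Rightarrow> real) \<Rightarrow> real" where
  "Fmax n x = Max ((\<lambda>r. frel r x) ` Fam n)"

definition beta_star :: "nat \<Rightarrow> real" where
  "beta_star n = Inf (Fmax n ` Delta n)"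

definition C_set :: "relation \<Rightarrow> (word \<Rightarrow> real) set" where
  "C_set r = {x. xr r x + Xr r x - xr r x * Xr r x < 3/4}"

end

theory Submission
  imports Defs
begin

text \<open>Write \<open>k = 2n - 1\<close> for the number of letters other than a given one and
  \<open>L = (2k(k - 1) - 1)(2k - 1)\<close>. Let \<open>r\<close> be the 4b relation of \<open>\<xi>\<^sub>i\<^sup>t \<xi>\<^sub>j\<^sup>s \<xi>\<^sub>i\<^sup>-\<^sup>t\<close>. Since
  \<open>S(\<xi>\<^sub>i\<^sup>t)\<close> also contains \<open>\<xi>\<^sub>i\<^sup>2\<^sup>t\<close>, we have \<open>x\<^sub>r < X\<^sub>r\<close>, so outside \<open>C\<^sub>r\<close>, where
  \<open>(1 - x\<^sub>r)(1 - X\<^sub>r) \<le> 1/4\<close>, the block \<open>S(\<xi>\<^sub>i\<^sup>t)\<close> carries mass more than \<open>1/2\<close>. The other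
  \<open>k\<close> blocks \<open>S(l)\<close> share less than \<open>1/2\<close>, so one of them has mass \<open>X < 1/(2k)\<close>, and one of
  its \<open>k - 1\<close> words \<open>l \<xi>\<^sub>j\<^sup>s l\<^sup>-\<^sup>1\<close> has mass at most \<open>X/(k - 1)\<close>; the 4b relation of that
  word has \<open>f > L\<close>. On the other hand, at the point giving weight 1 to the words \<open>\<xi>\<^sub>i\<^sup>2\<^sup>t\<close>
  and \<open>\<xi>\<^sub>i\<^sup>t \<xi>\<^sub>j\<^sup>s \<xi>\<^sub>i\<^sup>-\<^sup>t\<close> and weight \<open>1/(8n)\<close> to all others, every \<open>f\<^sub>r\<close> is below \<open>L\<close>.
  So \<open>\<beta>\<^sup>* < L\<close>, and a point outside \<open>C\<^sub>r\<close> cannot attain \<open>\<beta>\<^sup>*\<close>.\<close>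

section \<open>Blocks of words with a common first letter\<close>

fun inv_letter :: "letter \<Rightarrow> letter" where
  "inv_letter (i, t) = (i, \<not> t)"

definition letters :: "nat \<Rightarrow> letter set" where
  "letters n = {1..n} \<times> UNIV"

lemma finite_letters: "finite (letters n)"
  by (simp add: letters_def)

lemma card_letters: "card (letters n) = 2 * n"
  by (simp add: letters_def card_cartesian_product)

lemma S1_subset_Psi: "l \<in> letters n \<Longrightarrow> S1 n l \<subseteq> Psi n"
  unfolding letters_def S1_def Psi_def by auto

lemma hd_of_mem_S1: "w \<in> S1 n l \<Longrightarrow> hd w = l"
  unfolding S1_def by (cases l) auto

lemma square_mem_S1: "[l, l] \<in> S1 n l"
  unfolding S1_def by (cases l) auto

lemma Psi_eq_UN_S1: "Psi n = (\<Union>l\<in>letters n. S1 n l)"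
proof
  show "Psi n \<subseteq> (\<Union>l\<in>letters n. S1 n l)"
    unfolding Psi_def S1_def letters_def by auto
  show "(\<Union>l\<in>letters n. S1 n l) \<subseteq> Psi n"
    using S1_subset_Psi by blast
qed

lemma finite_S1: "finite (S1 n l)"
proof -
  have "S1 n l \<subseteq> {w. set w \<subseteq> insert l (letters n) \<and> length w \<le> 3}"
    unfolding S1_def letters_def by (cases l) auto
  then show ?thesis
    using finite_lists_length_le[of "insert l (letters n)"] finite_letters finite_subset by blast
qed

lemma finite_Psi: "finite (Psi n)"
  by (simp add: Psi_eq_UN_S1 finite_letters finite_S1)

lemma S1_disjoint: "l \<noteq> l' \<Longrightarrow> S1 n l \<inter> S1 n l' = {}"
  using hd_of_mem_S1 by blast

lemma sum_Psi_eq_sum_S1: "sum g (Psi n) = (\<Sum>l\<in>letters n. sum g (S1 n l))"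
  unfolding Psi_eq_UN_S1
  by (rule sum.UNION_disjoint) (auto simp: finite_letters finite_S1 S1_disjoint)

lemma sum_Psi_minus_S1:
  fixes g :: "word \<Rightarrow> 'a::ab_group_add"
  assumes "l \<in> letters n"
  shows "sum g (Psi n - S1 n l) = (\<Sum>l'\<in>letters n - {l}. sum g (S1 n l'))"
  using sum_diff[OF finite_Psi S1_subset_Psi[OF assms], of g]
    sum.remove[OF finite_letters assms, of "\<lambda>l. sum g (S1 n l)"]
  by (simp add: sum_Psi_eq_sum_S1)

definition conj_words :: "nat \<Rightarrow> letter \<Rightarrow> word set" where
  "conj_words n l = {[l, (j, s), inv_letter l] | j s. j \<in> {1..n} \<and> j \<noteq> fst l}"

lemma conj_words_subset_S1: "l \<in> letters n \<Longrightarrow> conj_words n l \<subseteq> S1 n l"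
  unfolding conj_words_def S1_def letters_def by (cases l) auto

lemma conj_words_eq_image:
  "conj_words n l = (\<lambda>(j, s). [l, (j, s), inv_letter l]) ` (({1..n} - {fst l}) \<times> UNIV)"
  unfolding conj_words_def by auto

lemma finite_conj_words: "finite (conj_words n l)"
  by (simp add: conj_words_eq_image)

lemma card_conj_words:
  assumes "l \<in> letters n"
  shows "card (conj_words n l) = 2 * (n - 1)"
proof -
  have "card (conj_words n l) = card (({1..n} - {fst l}) \<times> (UNIV :: bool set))"
    unfolding conj_words_eq_image by (rule card_image) (auto simp: inj_on_def)
  also have "\<dots> = 2 * (n - 1)"
    using assms by (auto simp: card_cartesian_product letters_def)
  finally show ?thesis .
qed

lemma S2_subset_image_letters:
  assumes "l2 \<in> letters n"
  shows "S2 n l1 l2 \<subseteq> (\<lambda>l3. [l1, l2, l3]) ` letters n"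
proof -
  obtain a x b y where "l1 = (a, x)" "l2 = (b, y)"
    by (cases l1, cases l2)
  with assms show ?thesis
    unfolding S2_def letters_def by auto
qed

lemma finite_S2: "l2 \<in> letters n \<Longrightarrow> finite (S2 n l1 l2)"
  by (rule finite_subset[OF S2_subset_image_letters]) (simp_all add: finite_letters)

lemma card_S2:
  assumes "l2 \<in> letters n"
  shows "card (S2 n l1 l2) \<le> 2 * n"
proof -
  have "card (S2 n l1 l2) \<le> card ((\<lambda>l3. [l1, l2, l3]) ` letters n)"
    by (rule card_mono[OF finite_imageI[OF finite_letters] S2_subset_image_letters[OF assms]])
  also have "\<dots> \<le> card (letters n)"
    using finite_letters by (rule card_image_le)
  finally show ?thesis
    by (simp add: card_letters)
qed

lemma S2_subset_S1:
  assumes "l2 \<in> letters n" "fst l1 \<noteq> fst l2"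
  shows "S2 n l1 l2 \<subseteq> S1 n l1"
proof -
  obtain a x b y where "l1 = (a, x)" "l2 = (b, y)"
    by (cases l1, cases l2)
  with assms show ?thesis
    unfolding S2_def S1_def letters_def by auto
qed

lemma rel_4b_eq: "rel_4b n = {(w, S1 n l) | l w. l \<in> letters n \<and> w \<in> conj_words n l}"
  unfolding rel_4b_def conj_words_def letters_def by fastforce

lemma Fam_subset: "Fam n \<subseteq> Psi n \<times> Pow (Psi n)"
proof -
  have "rel_1a n \<subseteq> Psi n \<times> Pow (Psi n)"
    unfolding rel_1a_def Psi_def by fastforce
  moreover have "rel_2b n \<subseteq> Psi n \<times> Pow (Psi n)"
    unfolding rel_2b_def Psi_def by fastforce
  moreover have "rel_3a n \<subseteq> Psi n \<times> Pow (Psi n)"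
    unfolding rel_3a_def Psi_def by fastforce
  moreover have "rel_5a n \<subseteq> Psi n \<times> Pow (Psi n)"
    unfolding rel_5a_def Psi_def by fastforce
  moreover have "rel_4b n \<subseteq> Psi n \<times> Pow (Psi n)"
    unfolding rel_4b_eq using S1_subset_Psi conj_words_subset_S1 by blast
  ultimately show ?thesis
    unfolding Fam_def by blast
qed

lemma Fam_memD:
  assumes "r \<in> Fam n"
  shows "fst r \<in> Psi n" "snd r \<subseteq> Psi n"
  using subsetD[OF Fam_subset assms] by (auto simp: mem_Times_iff)

lemma finite_Fam: "finite (Fam n)"
  using Fam_subset by (rule finite_subset) (simp add: finite_Psi)

lemma Fam_nonempty:
  assumes "1 \<le> n"
  shows "Fam n \<noteq> {}"
proof -
  have "([(1, True), (1, True)], Psi n - S1 n (1, True)) \<in> rel_1a n"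
    using assms unfolding rel_1a_def by auto
  then show ?thesis
    unfolding Fam_def by blast
qed

text \<open>Types 2b, 3a and 5a all have \<open>\<Psi>\<^sub>r = \<Psi> - S(l\<^sub>1 l\<^sub>2)\<close>.\<close>

lemma Fam_cases:
  assumes "r \<in> Fam n"
  obtains (square) l where "l \<in> letters n" "r = ([l, l], Psi n - S1 n l)"
  | (conj) l w where "l \<in> letters n" "w \<in> conj_words n l" "r = (w, S1 n l)"
  | (S2) l1 l2 where "l1 \<in> letters n" "l2 \<in> letters n" "fst l1 \<noteq> fst l2"
      "snd r = Psi n - S2 n l1 l2"
  using assms unfolding Fam_def rel_4b_eq
  unfolding rel_1a_def rel_2b_def rel_3a_def rel_5a_def letters_def
  by (elim UnE; clarsimp; metis fst_conv mem_Sigma_iff UNIV_I)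

lemma Delta_pos: "x \<in> Delta n \<Longrightarrow> w \<in> Psi n \<Longrightarrow> 0 < x w"
  unfolding Delta_def by blast

lemma Delta_sum_Psi: "x \<in> Delta n \<Longrightarrow> sum x (Psi n) = 1"
  unfolding Delta_def by blast

lemma Delta_sum_nonneg: "x \<in> Delta n \<Longrightarrow> T \<subseteq> Psi n \<Longrightarrow> 0 \<le> sum x T"
  using Delta_pos by (fastforce intro: sum_nonneg less_imp_le)

lemma Delta_sum_le_1:
  assumes "x \<in> Delta n" "T \<subseteq> Psi n"
  shows "sum x T \<le> 1"
proof -
  have "sum x T \<le> sum x (Psi n)"
    using assms Delta_pos by (intro sum_mono2 finite_Psi) (auto intro: less_imp_le)
  then show ?thesis
    using Delta_sum_Psi[OF assms(1)] by simp
qed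

lemma Delta_sum_S1_pos:
  assumes "x \<in> Delta n" "l \<in> letters n"
  shows "0 < sum x (S1 n l)"
proof (rule sum_pos2[OF finite_S1])
  show "[l, l] \<in> S1 n l"
    by (rule square_mem_S1)
  then show "0 < x [l, l]"
    using assms Delta_pos S1_subset_Psi by blast
  show "\<And>w. w \<in> S1 n l \<Longrightarrow> 0 \<le> x w"
    using assms Delta_pos S1_subset_Psi by (blast intro: less_imp_le)
qed

lemma frel_nonneg:
  assumes "x \<in> Delta n" "r \<in> Fam n"
  shows "0 \<le> frel r x"
proof -
  have "0 < xr r x" "xr r x \<le> 1" "0 \<le> Xr r x" "Xr r x \<le> 1"
    using assms(1) Fam_memD[OF assms(2)] Delta_pos Delta_sum_nonneg
      Delta_sum_le_1[of x n "{fst r}"] Delta_sum_le_1[of x n "snd r"]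
    unfolding xr_def Xr_def by auto
  then show ?thesis
    unfolding frel_def by simp
qed

lemma frel_le_Fmax: "r \<in> Fam n \<Longrightarrow> frel r x \<le> Fmax n x"
  unfolding Fmax_def by (simp add: finite_Fam)

lemma beta_star_le_Fmax:
  assumes "1 \<le> n" "x \<in> Delta n"
  shows "beta_star n \<le> Fmax n x"
proof -
  obtain r where r: "r \<in> Fam n"
    using Fam_nonempty[OF assms(1)] by blast
  have "bdd_below (Fmax n ` Delta n)"
  proof (rule bdd_belowI)
    fix v
    assume "v \<in> Fmax n ` Delta n"
    then obtain y where "y \<in> Delta n" "v = Fmax n y"
      by blast
    then show "0 \<le> v"
      using frel_nonneg[OF _ r] frel_le_Fmax[OF r] order.trans by blast
  qed
  then show ?thesis
    unfolding beta_star_def using assms(2) by (simp add: cInf_lower)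
qed

section \<open>Outside \<open>C\<^sub>r\<close> some relation of type 4b is large\<close>

lemma exists_card_mult_le_sum:
  fixes f :: "'a \<Rightarrow> 'b::linordered_idom"
  assumes "finite A" "A \<noteq> {}"
  shows "\<exists>a\<in>A. of_nat (card A) * f a \<le> sum f A"
proof (rule ccontr)
  assume "\<not> ?thesis"
  then have "(\<Sum>a\<in>A. sum f A) < (\<Sum>a\<in>A. of_nat (card A) * f a)"
    using assms by (intro sum_strict_mono) auto
  then show False
    by (simp add: sum_distrib_left)
qed

text \<open>This is \<open>L = (2k(k - 1) - 1)(2k - 1)\<close> with \<open>k = 2N - 1\<close>.\<close>

definition beta_bound :: "real \<Rightarrow> real" where
  "beta_bound N = (4 * (N - 1) * (2 * N - 1) - 1) * (4 * N - 3)"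

lemma beta_bound_lt_odds_product:
  fixes N a b :: real
  assumes "2 \<le> N" "0 < b" "2 * (2 * N - 1) * b < 1" "0 < a" "2 * (N - 1) * a \<le> b"
  shows "beta_bound N < (1 - a) / a * ((1 - b) / b)"
proof -
  have b: "2 * (2 * N - 1) < 1 / b"
    using assms(3) by (simp add: pos_less_divide_eq[OF assms(2)])
  have "2 * (N - 1) * (2 * (2 * N - 1)) < 2 * (N - 1) * (1 / b)"
    using b assms(1) by (intro mult_strict_left_mono) auto
  also have "\<dots> \<le> 1 / a"
    using assms(2,4,5) by (simp add: field_simps)
  finally have a: "4 * (N - 1) * (2 * N - 1) - 1 < 1 / a - 1"
    by (simp add: algebra_simps)
  have "0 \<le> 4 * (N - 1) * (2 * N - 1) - 1"
    using mult_mono[of 1 "N - 1" 3 "2 * N - 1"] assms(1) by (simp add: algebra_simps)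
  then have "(4 * (N - 1) * (2 * N - 1) - 1) * (4 * N - 3) < (1 / a - 1) * (1 / b - 1)"
    using a b assms(1) by (intro mult_strict_mono) auto
  then show ?thesis
    unfolding beta_bound_def using assms by (simp add: diff_divide_distrib)
qed

lemma half_lt_of_three_quarters_le:
  fixes a b :: real
  assumes "a < b" "3 / 4 \<le> a + b - a * b"
  shows "1 / 2 < b"
proof (rule ccontr)
  assume "\<not> 1 / 2 < b"
  then have "1 / 2 \<le> 1 - b"
    by simp
  then have "1 / 4 \<le> (1 - b) * (1 - b)"
    using mult_mono[of "1/2" "1 - b" "1/2" "1 - b"] by simp
  also have "\<dots> < (1 - a) * (1 - b)"
    using assms(1) \<open>1 / 2 \<le> 1 - b\<close> by (intro mult_strict_right_mono) auto
  finally show False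
    using assms(2) by (simp add: algebra_simps)
qed

lemma exists_light_S1:
  assumes "2 \<le> n" "x \<in> Delta n" "l \<in> letters n" "1 / 2 < sum x (S1 n l)"
  shows "\<exists>l'\<in>letters n. 2 * (2 * real n - 1) * sum x (S1 n l') < 1"
proof -
  have card: "card (letters n - {l}) = 2 * n - 1"
    using assms(3) by (simp add: card_letters finite_letters)
  have "letters n - {l} \<noteq> {}"
    using card assms(1) by (intro notI) simp
  then obtain l' where l': "l' \<in> letters n - {l}"
    and le: "real (2 * n - 1) * sum x (S1 n l') \<le> (\<Sum>l''\<in>letters n - {l}. sum x (S1 n l''))"
    using exists_card_mult_le_sum[OF _ , of "letters n - {l}" "\<lambda>l'. sum x (S1 n l')"]
    by (auto simp: card finite_letters)
  have "(\<Sum>l''\<in>letters n - {l}. sum x (S1 n l'')) = 1 - sum x (S1 n l)"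
    using sum_Psi_minus_S1[OF assms(3), of x] sum_diff[OF finite_Psi S1_subset_Psi[OF assms(3)], of x]
      Delta_sum_Psi[OF assms(2)] by simp
  with le assms(1) have "(2 * real n - 1) * sum x (S1 n l') \<le> 1 - sum x (S1 n l)"
    by simp
  then have "2 * (2 * real n - 1) * sum x (S1 n l') < 1"
    using assms(4) by linarith
  then show ?thesis
    using l' by blast
qed

lemma exists_light_conj_word:
  assumes "2 \<le> n" "x \<in> Delta n" "l \<in> letters n"
  shows "\<exists>w\<in>conj_words n l. 2 * (real n - 1) * x w \<le> sum x (S1 n l)"
proof -
  have card: "card (conj_words n l) = 2 * (n - 1)"
    using card_conj_words[OF assms(3)] .
  have fin: "finite (conj_words n l)"
    by (rule finite_conj_words)
  with card assms(1) have "conj_words n l \<noteq> {}"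
    by auto
  then obtain w where w: "w \<in> conj_words n l"
    and le: "real (2 * (n - 1)) * x w \<le> sum x (conj_words n l)"
    using exists_card_mult_le_sum[OF fin, of x] card by auto
  have "\<forall>w\<in>S1 n l. 0 \<le> x w"
    using assms(2,3) S1_subset_Psi Delta_pos by (blast intro: less_imp_le)
  then have "sum x (conj_words n l) \<le> sum x (S1 n l)"
    using assms(3) conj_words_subset_S1 by (intro sum_mono2 finite_S1) auto
  then show ?thesis
    using w le assms(1) by (intro bexI[of _ w]) auto
qed

lemma exists_rel_4b_gt_beta_bound:
  assumes "2 \<le> n" "x \<in> Delta n" "r \<in> rel_4b n" "x \<notin> C_set r"
  shows "\<exists>r'\<in>rel_4b n. beta_bound (real n) < frel r' x"
proof -
  obtain l w where r: "r = (w, S1 n l)" and l: "l \<in> letters n" and w: "w \<in> conj_words n l"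
    using assms(3) unfolding rel_4b_eq by blast
  have sq: "[l, l] \<in> S1 n l" "[l, l] \<noteq> w"
    using square_mem_S1 w unfolding conj_words_def by auto
  have "x w + x [l, l] = sum x {w, [l, l]}"
    using sq(2) by simp
  also have "\<dots> \<le> sum x (S1 n l)"
    using assms(2) l w sq conj_words_subset_S1 S1_subset_Psi Delta_pos
    by (intro sum_mono2 finite_S1) (blast intro: less_imp_le)+
  finally have "x w < sum x (S1 n l)"
    using assms(2) l sq S1_subset_Psi Delta_pos by fastforce
  then have "1 / 2 < sum x (S1 n l)"
    using assms(4) half_lt_of_three_quarters_le unfolding C_set_def xr_def Xr_def r by force
  then obtain l' where l': "l' \<in> letters n" and light: "2 * (2 * real n - 1) * sum x (S1 n l') < 1"
    using exists_light_S1 assms(1,2) l by blast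
  obtain w' where w': "w' \<in> conj_words n l'" and lighter: "2 * (real n - 1) * x w' \<le> sum x (S1 n l')"
    using exists_light_conj_word assms(1,2) l' by blast
  have "w' \<in> Psi n"
    using w' l' conj_words_subset_S1 S1_subset_Psi by blast
  then have "beta_bound (real n) < frel (w', S1 n l') x"
    unfolding frel_def xr_def Xr_def fst_conv snd_conv
    using assms(1,2) light lighter l' Delta_sum_S1_pos Delta_pos
    by (intro beta_bound_lt_odds_product) auto
  moreover have "(w', S1 n l') \<in> rel_4b n"
    unfolding rel_4b_eq using l' w' by blast
  ultimately show ?thesis
    by blast
qed

section \<open>A point at which every relation is small\<close>

definition heavy_words :: "nat \<Rightarrow> word set" where
  "heavy_words n = (\<Union>l\<in>letters n. insert [l, l] (conj_words n l))"

text \<open>The light weight \<open>1/(8n)\<close> balances the relations of type 4b, which need little mass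
  outside the heavy words, against the others, whose word \<open>\<psi>\<^sub>r\<close> may be light.\<close>

definition weight :: "nat \<Rightarrow> word \<Rightarrow> real" where
  "weight n w = (if w \<in> heavy_words n then 1 else 1 / (8 * real n))"

definition total_weight :: "nat \<Rightarrow> real" where
  "total_weight n = sum (weight n) (Psi n)"

definition test_point :: "nat \<Rightarrow> word \<Rightarrow> real" where
  "test_point n w = (if w \<in> Psi n then weight n w / total_weight n else 0)"

lemma S1_inter_heavy_words:
  assumes "l \<in> letters n"
  shows "S1 n l \<inter> heavy_words n = insert [l, l] (conj_words n l)"
proof
  show "S1 n l \<inter> heavy_words n \<subseteq> insert [l, l] (conj_words n l)"
  proof
    fix w
    assume w: "w \<in> S1 n l \<inter> heavy_words n"
    then obtain l' where "w \<in> insert [l', l'] (conj_words n l')"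
      unfolding heavy_words_def by blast
    moreover from this have "hd w = l'"
      unfolding conj_words_def by auto
    moreover have "hd w = l"
      using w hd_of_mem_S1 by blast
    ultimately show "w \<in> insert [l, l] (conj_words n l)"
      by simp
  qed
  show "insert [l, l] (conj_words n l) \<subseteq> S1 n l \<inter> heavy_words n"
    using assms square_mem_S1 conj_words_subset_S1 unfolding heavy_words_def by blast
qed

lemma card_S1_inter_heavy_words:
  assumes "l \<in> letters n"
  shows "card (S1 n l \<inter> heavy_words n) = 2 * n - 1"
proof -
  have "[l, l] \<notin> conj_words n l"
    unfolding conj_words_def by auto
  then have "card (insert [l, l] (conj_words n l)) = Suc (2 * (n - 1))"
    by (simp add: finite_conj_words card_conj_words[OF assms])
  moreover have "1 \<le> n"
    using assms unfolding letters_def by auto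
  ultimately show ?thesis
    by (simp add: S1_inter_heavy_words[OF assms])
qed

lemma card_S1_minus_heavy_words:
  assumes "l \<in> letters n"
  shows "card (S1 n l - heavy_words n) \<le> 4 * n * (n - 1)"
proof -
  let ?A = "(({1..n} - {fst l}) \<times> (UNIV :: bool set)) \<times> letters n"
  have fin: "finite ?A"
    by (simp add: finite_letters)
  have "S1 n l - heavy_words n \<subseteq> S1 n l - {[l, l]}"
    using S1_inter_heavy_words[OF assms] by blast
  also have "\<dots> \<subseteq> (\<lambda>(l2, l3). [l, l2, l3]) ` ?A"
    unfolding S1_def letters_def by (cases l) auto
  finally have "card (S1 n l - heavy_words n) \<le> card ((\<lambda>(l2, l3). [l, l2, l3]) ` ?A)"
    using fin by (intro card_mono) auto
  also have "\<dots> \<le> card ?A"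
    using fin by (rule card_image_le)
  also have "card ?A = 4 * n * (n - 1)"
    using assms by (auto simp: card_cartesian_product card_letters letters_def)
  finally show ?thesis .
qed

lemma S2_inter_heavy_words: "S2 n l1 l2 \<inter> heavy_words n \<subseteq> {[l1, l2, inv_letter l1]}"
proof
  fix w
  assume w: "w \<in> S2 n l1 l2 \<inter> heavy_words n"
  then obtain l3 where "w = [l1, l2, l3]"
    unfolding S2_def by (cases l1; cases l2) auto
  moreover obtain l where "w \<in> insert [l, l] (conj_words n l)"
    using w unfolding heavy_words_def by blast
  ultimately show "w \<in> {[l1, l2, inv_letter l1]}"
    unfolding conj_words_def by auto
qed

lemma sum_weight:
  assumes "finite T"
  shows "sum (weight n) T
    = card (T \<inter> heavy_words n) + card (T - heavy_words n) / (8 * real n)"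
proof -
  have "sum (weight n) T = sum (weight n) (T \<inter> heavy_words n) + sum (weight n) (T - heavy_words n)"
    using assms by (rule sum.Int_Diff)
  also have "\<dots> = card (T \<inter> heavy_words n) + card (T - heavy_words n) / (8 * real n)"
    by (simp add: weight_def)
  finally show ?thesis .
qed

lemma weight_pos: "1 \<le> n \<Longrightarrow> 0 < weight n w"
  by (simp add: weight_def)

lemma light_le_weight: "1 \<le> n \<Longrightarrow> 1 / (8 * real n) \<le> weight n w"
  by (simp add: weight_def)

lemma weight_heavy_word: "w \<in> heavy_words n \<Longrightarrow> weight n w = 1"
  by (simp add: weight_def)

lemma weight_S1_ge:
  assumes "l \<in> letters n"
  shows "2 * real n - 1 \<le> sum (weight n) (S1 n l)"
proof -
  have "1 \<le> n"
    using assms unfolding letters_def by auto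
  moreover have "0 \<le> card (S1 n l - heavy_words n) / (8 * real n)"
    by simp
  ultimately show ?thesis
    using assms by (simp add: sum_weight finite_S1 card_S1_inter_heavy_words)
qed

lemma weight_S1_le:
  assumes "l \<in> letters n"
  shows "sum (weight n) (S1 n l) \<le> 2 * real n - 1 + (real n - 1) / 2"
proof -
  have n: "1 \<le> n"
    using assms unfolding letters_def by auto
  have "real (card (S1 n l - heavy_words n)) \<le> real (4 * n * (n - 1))"
    using card_S1_minus_heavy_words[OF assms] by (simp only: of_nat_le_iff)
  also have "\<dots> = 4 * real n * (real n - 1)"
    using n by simp
  finally have "real (card (S1 n l - heavy_words n)) \<le> 4 * real n * (real n - 1)" .
  then have "card (S1 n l - heavy_words n) / (8 * real n) \<le> (real n - 1) / 2"
    using n by (simp add: field_simps)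
  moreover have "sum (weight n) (S1 n l) = real (2 * n - 1) + card (S1 n l - heavy_words n) / (8 * real n)"
    using assms by (simp add: sum_weight finite_S1 card_S1_inter_heavy_words)
  ultimately show ?thesis
    using n by simp
qed

lemma weight_S2_le:
  assumes "1 \<le> n" "l2 \<in> letters n"
  shows "sum (weight n) (S2 n l1 l2) \<le> 5 / 4"
proof -
  have "real (card (S2 n l1 l2 \<inter> heavy_words n)) \<le> 1"
    using card_mono[OF _ S2_inter_heavy_words] by simp
  moreover have "card (S2 n l1 l2 - heavy_words n) \<le> 2 * n"
    using le_trans[OF card_mono[OF finite_S2[OF assms(2)] Diff_subset] card_S2[OF assms(2)]] .
  then have "card (S2 n l1 l2 - heavy_words n) / (8 * real n) \<le> 1 / 4"
    using assms(1) by (simp add: field_simps)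
  ultimately show ?thesis
    using sum_weight[OF finite_S2[OF assms(2)], of n l1] by linarith
qed

lemma total_weight_le:
  "total_weight n \<le> 2 * real n * (2 * real n - 1 + (real n - 1) / 2)"
proof -
  have "total_weight n \<le> real (card (letters n)) * (2 * real n - 1 + (real n - 1) / 2)"
    unfolding total_weight_def sum_Psi_eq_sum_S1 by (rule sum_bounded_above) (rule weight_S1_le)
  then show ?thesis
    by (simp add: card_letters)
qed

lemma weight_Psi_minus_S1_ge:
  assumes "l \<in> letters n"
  shows "(2 * real n - 1)^2 \<le> sum (weight n) (Psi n - S1 n l)"
proof -
  have "real (card (letters n - {l})) * (2 * real n - 1) \<le> sum (weight n) (Psi n - S1 n l)"
    unfolding sum_Psi_minus_S1[OF assms] by (rule sum_bounded_below) (simp add: weight_S1_ge)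
  moreover have "card (letters n - {l}) = 2 * n - 1"
    using assms by (simp add: card_letters finite_letters)
  moreover have "1 \<le> n"
    using assms unfolding letters_def by auto
  ultimately show ?thesis
    by (simp add: power2_eq_square)
qed

lemma total_weight_pos:
  assumes "1 \<le> n"
  shows "0 < total_weight n"
  unfolding total_weight_def
proof (rule sum_pos[OF finite_Psi])
  have "[(1, True), (1, True)] \<in> Psi n"
    using assms unfolding Psi_def by auto
  then show "Psi n \<noteq> {}"
    by blast
  show "\<And>w. w \<in> Psi n \<Longrightarrow> 0 < weight n w"
    using assms by (rule weight_pos)
qed

lemma test_point_in_Delta:
  assumes "1 \<le> n"
  shows "test_point n \<in> Delta n"
proof -
  have "sum (test_point n) (Psi n) = (\<Sum>w\<in>Psi n. weight n w / total_weight n)"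
    unfolding test_point_def by (rule sum.cong) auto
  also have "\<dots> = 1"
    using total_weight_pos[OF assms] by (simp add: total_weight_def flip: sum_divide_distrib)
  finally show ?thesis
    using total_weight_pos[OF assms] weight_pos[OF assms]
    unfolding Delta_def test_point_def by auto
qed

lemma frel_test_point:
  assumes "1 \<le> n" "r \<in> Fam n"
  shows "frel r (test_point n)
    = (total_weight n - weight n (fst r)) / weight n (fst r)
      * ((total_weight n - sum (weight n) (snd r)) / sum (weight n) (snd r))"
proof -
  have r: "fst r \<in> Psi n" "snd r \<subseteq> Psi n"
    using Fam_memD[OF assms(2)] .
  have Xr: "Xr r (test_point n) = sum (weight n) (snd r) / total_weight n"
    unfolding Xr_def test_point_def sum_divide_distrib
    using r(2) by (intro sum.cong) auto
  have xr: "xr r (test_point n) = weight n (fst r) / total_weight n"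
    unfolding xr_def test_point_def using r(1) by simp
  have rescale: "(1 - a / total_weight n) / (a / total_weight n) = (total_weight n - a) / a" for a
    using total_weight_pos[OF assms(1)] by (cases "a = 0") (simp_all add: field_simps)
  show ?thesis
    by (simp only: frel_def xr Xr rescale)
qed

lemma frel_test_point_le:
  assumes "1 \<le> n" "r \<in> Fam n"
    and "0 < c" "c \<le> weight n (fst r)"
    and "0 < q" "q \<le> sum (weight n) (snd r)"
    and "sum (weight n) (Psi n - snd r) \<le> \<rho> * c * q"
  shows "frel r (test_point n) \<le> \<rho> * total_weight n"
proof -
  define Z where "Z = total_weight n"
  define z where "z = weight n (fst r)"
  define Q where "Q = sum (weight n) (snd r)"
  have r: "fst r \<in> Psi n" "snd r \<subseteq> Psi n"
    using Fam_memD[OF assms(2)] .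
  have nonneg: "\<And>T. 0 \<le> sum (weight n) T"
    using weight_pos[OF assms(1)] by (simp add: sum_nonneg less_imp_le)
  have "z \<le> Z"
    unfolding z_def Z_def total_weight_def using r(1) nonneg weight_pos[OF assms(1)]
    by (intro member_le_sum finite_Psi) (auto intro: less_imp_le)
  then have z: "0 \<le> (Z - z) / z" "(Z - z) / z \<le> Z / c"
    using assms(3,4) unfolding z_def by (auto simp: frac_le)
  have compl: "Z - Q = sum (weight n) (Psi n - snd r)"
    unfolding Z_def Q_def total_weight_def by (simp add: sum_diff[OF finite_Psi r(2)])
  have q: "0 < q" "q \<le> Q"
    using assms(5,6) unfolding Q_def by auto
  have compl_le: "0 \<le> Z - Q" "Z - Q \<le> \<rho> * c * q"
    using compl nonneg assms(7) by auto
  have "(Z - Q) / Q \<le> \<rho> * c * q / q"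
    using compl_le q by (intro frac_le) auto
  then have Q: "0 \<le> (Z - Q) / Q" "(Z - Q) / Q \<le> \<rho> * c"
    using compl_le q by auto
  have "frel r (test_point n) = (Z - z) / z * ((Z - Q) / Q)"
    unfolding Z_def z_def Q_def using frel_test_point[OF assms(1,2)] .
  also have "\<dots> \<le> Z / c * (\<rho> * c)"
    using z Q by (intro mult_mono) auto
  also have "\<dots> = \<rho> * Z"
    using assms(3) by simp
  finally show ?thesis
    unfolding Z_def .
qed

lemma frel_test_point_square_le:
  assumes "2 \<le> n" "l \<in> letters n" "([l, l], Psi n - S1 n l) \<in> Fam n"
  shows "frel ([l, l], Psi n - S1 n l) (test_point n) \<le> 5 * (2 * real n - 1) / 4 * total_weight n"
proof (rule frel_test_point_le[OF _ assms(3), where c = 1 and q = "(2 * real n - 1)^2"])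
  have "[l, l] \<in> heavy_words n"
    using assms(2) unfolding heavy_words_def by blast
  then show "1 \<le> weight n (fst ([l, l], Psi n - S1 n l))"
    by (simp add: weight_heavy_word)
  show "(2 * real n - 1)^2 \<le> sum (weight n) (snd ([l, l], Psi n - S1 n l))"
    using weight_Psi_minus_S1_ge[OF assms(2)] by simp
  have "Psi n - snd ([l, l], Psi n - S1 n l) = S1 n l"
    using S1_subset_Psi[OF assms(2)] by auto
  then have "sum (weight n) (Psi n - snd ([l, l], Psi n - S1 n l))
      \<le> 2 * real n - 1 + (real n - 1) / 2"
    using weight_S1_le[OF assms(2)] by simp
  also have "\<dots> \<le> 5 * (2 * real n - 1) / 4 * 1"
    by (simp add: field_simps)
  also have "\<dots> \<le> 5 * (2 * real n - 1) / 4 * (2 * real n - 1)^2"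
    using assms(1) by (intro mult_left_mono) auto
  finally show "sum (weight n) (Psi n - snd ([l, l], Psi n - S1 n l))
      \<le> 5 * (2 * real n - 1) / 4 * 1 * (2 * real n - 1)^2"
    by simp
qed (use assms(1) in auto)

lemma frel_test_point_conj_le:
  assumes "2 \<le> n" "l \<in> letters n" "w \<in> conj_words n l"
  shows "frel (w, S1 n l) (test_point n) \<le> 5 * (2 * real n - 1) / 4 * total_weight n"
proof (rule frel_test_point_le[where c = 1 and q = "2 * real n - 1"])
  show "(w, S1 n l) \<in> Fam n"
    using assms(2,3) unfolding Fam_def rel_4b_eq by blast
  have "w \<in> heavy_words n"
    using assms(2,3) unfolding heavy_words_def by blast
  then show "1 \<le> weight n (fst (w, S1 n l))"
    by (simp add: weight_heavy_word)
  show "2 * real n - 1 \<le> sum (weight n) (snd (w, S1 n l))"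
    using weight_S1_ge[OF assms(2)] by simp
  have "sum (weight n) (Psi n - S1 n l) = total_weight n - sum (weight n) (S1 n l)"
    unfolding total_weight_def using S1_subset_Psi[OF assms(2)] by (simp add: sum_diff finite_Psi)
  also have "\<dots> \<le> 2 * real n * (2 * real n - 1 + (real n - 1) / 2) - (2 * real n - 1)"
    using total_weight_le weight_S1_ge[OF assms(2)] by (intro diff_mono)
  also have "\<dots> \<le> 5 * (2 * real n - 1) / 4 * 1 * (2 * real n - 1)"
    by (simp add: field_simps)
  finally show "sum (weight n) (Psi n - snd (w, S1 n l))
      \<le> 5 * (2 * real n - 1) / 4 * 1 * (2 * real n - 1)"
    by simp
qed (use assms(1) in auto)

lemma frel_test_point_S2_le:
  assumes "2 \<le> n" "r \<in> Fam n" "l1 \<in> letters n" "l2 \<in> letters n" "fst l1 \<noteq> fst l2"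
    and "snd r = Psi n - S2 n l1 l2"
  shows "frel r (test_point n) \<le> 5 * (2 * real n - 1) / 4 * total_weight n"
proof (rule frel_test_point_le[OF _ assms(2), where c = "1 / (8 * real n)" and q = "(2 * real n - 1)^2"])
  have S2: "S2 n l1 l2 \<subseteq> S1 n l1" "S1 n l1 \<subseteq> Psi n"
    using S2_subset_S1[OF assms(4,5)] S1_subset_Psi[OF assms(3)] .
  have "(2 * real n - 1)^2 \<le> sum (weight n) (Psi n - S1 n l1)"
    using weight_Psi_minus_S1_ge[OF assms(3)] .
  also have "\<dots> \<le> sum (weight n) (snd r)"
    unfolding assms(6) using S2 assms(1) weight_pos[of n]
    by (intro sum_mono2) (auto simp: finite_Psi less_imp_le)
  finally show "(2 * real n - 1)^2 \<le> sum (weight n) (snd r)" .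
  define k where "k = 2 * real n - 1"
  have k: "3 \<le> k" "8 * real n = 4 * k + 4"
    using assms(1) unfolding k_def by auto
  then have "9 \<le> k * k"
    using mult_mono[of 3 k 3 k] by simp
  then have "9 * k \<le> k * k * k"
    using k by (intro mult_right_mono) auto
  with k have "8 * real n \<le> k * k * k"
    by linarith
  then have "5 / 4 \<le> 5 * (2 * real n - 1) / 4 * (1 / (8 * real n)) * (2 * real n - 1)^2"
    using assms(1) unfolding k_def[symmetric] by (simp add: field_simps power2_eq_square)
  moreover have "Psi n - snd r = S2 n l1 l2"
    using S2 unfolding assms(6) by blast
  then have "sum (weight n) (Psi n - snd r) \<le> 5 / 4"
    using weight_S2_le[of n l2 l1] assms(1,4) by simp
  ultimately show "sum (weight n) (Psi n - snd r)
      \<le> 5 * (2 * real n - 1) / 4 * (1 / (8 * real n)) * (2 * real n - 1)^2"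
    by (rule order.trans[rotated])
qed (use assms(1) light_le_weight in auto)

text \<open>At \<open>N = 2\<close> the two sides differ only by \<open>5/2\<close>, so the weight estimates above
  cannot be coarsened much.\<close>

lemma total_weight_bound_lt_beta_bound:
  fixes N :: real
  assumes "2 \<le> N"
  shows "5 * (2 * N - 1) / 4 * (2 * N * (2 * N - 1 + (N - 1) / 2)) < beta_bound N"
proof -
  obtain d where N: "N = d + 2" and d: "0 \<le> d"
    using assms by (metis diff_add_cancel diff_ge_0_iff_ge)
  have "beta_bound N = 5 * (2 * N - 1) / 4 * (2 * N * (2 * N - 1 + (N - 1) / 2))
      + (10 + 181 * d + 235 * d^2 + 78 * d^3) / 4"
    unfolding beta_bound_def N by (simp add: field_simps power2_eq_square power3_eq_cube)
  moreover have "0 < (10 + 181 * d + 235 * d^2 + 78 * d^3) / 4"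
    using d by (intro divide_pos_pos add_pos_nonneg mult_nonneg_nonneg) auto
  ultimately show ?thesis
    by simp
qed

lemma Fmax_test_point_lt_beta_bound:
  assumes "2 \<le> n"
  shows "Fmax n (test_point n) < beta_bound (real n)"
proof -
  have "frel r (test_point n) < beta_bound (real n)" if r: "r \<in> Fam n" for r
  proof -
    have "frel r (test_point n) \<le> 5 * (2 * real n - 1) / 4 * total_weight n"
      using r
    proof (cases rule: Fam_cases)
      case (square l)
      then show ?thesis
        using frel_test_point_square_le assms r by blast
    next
      case (conj l w)
      then show ?thesis
        using frel_test_point_conj_le assms by blast
    next
      case (S2 l1 l2)
      then show ?thesis
        using frel_test_point_S2_le assms r by blast
    qed
    also have "\<dots> \<le> 5 * (2 * real n - 1) / 4 * (2 * real n * (2 * real n - 1 + (real n - 1) / 2))"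
      using assms total_weight_le by (intro mult_left_mono) auto
    also have "\<dots> < beta_bound (real n)"
      using assms by (intro total_weight_bound_lt_beta_bound) auto
    finally show ?thesis .
  qed
  then show ?thesis
    unfolding Fmax_def using assms finite_Fam Fam_nonempty by simp
qed

theorem theorem5p6:
  fixes n :: nat and r :: relation and xs :: "word \<Rightarrow> real"
  assumes "n \<ge> 2"
    and "r \<in> rel_4b n"
    and "xs \<in> Delta n"
    and "Fmax n xs = beta_star n"
  shows "xs \<in> Delta n \<inter> C_set r"
proof -
  have "beta_star n \<le> Fmax n (test_point n)"
    using assms(1) beta_star_le_Fmax test_point_in_Delta by simp
  then have "Fmax n xs < beta_bound (real n)"
    using assms(4) Fmax_test_point_lt_beta_bound[OF assms(1)] by simp
  moreover have "beta_bound (real n) < Fmax n xs" if outside: "xs \<notin> C_set r"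
  proof -
    obtain r' where "r' \<in> rel_4b n" "beta_bound (real n) < frel r' xs"
      using exists_rel_4b_gt_beta_bound[OF assms(1,3,2) outside] by blast
    then show ?thesis
      using frel_le_Fmax[of r' n xs] unfolding Fam_def by fastforce
  qed
  ultimately show ?thesis
    using assms(3) by fastforce
qed

end
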